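(* Let $(\vec U_i)_{i\in\mathbb{Z}}$ be a strictly stationary sequence of $d$-dimensional random vectors with c.d.f. $C$ (a copula), whose strong mixing coefficients satisfy $\alpha_r=O(r^{-a})$ for some $a>3$. Let $\ell_n\to\infty$ be strictly positive constants with $\ell_n=O(n^{1/2-\varepsilon})$ for some $0<\varepsilon<1/2$, and let $\varphi:\mathbb{R}\to[0,1]$ be symmetric around $0$, with $\varphi(0)=1$, $\varphi(x)=0$ for $|x|>1$, twice continuously differentiable on $[-1,1]$ with $\varphi''(0)\neq0$. Define, for $\vec u,\vec v\in[0,1]^d$, $$\tilde\sigma_n(\vec u,\vec v)=\frac1n\sum_{i,j=1}^n\varphi\{(i-j)/\ell_n\}\{\mathbf 1(\vec U_i\le\vec u)-C(\vec u)\}\{\mathbf 1(\vec U_j\le\vec v)-C(\vec v)\}.$$ Then for all $\vec u,\vec v\in[0,1]^d$, $$\mathrm E\{\tilde\sigma_n(\vec u,\vec v)\}-\sigma_C(\vec u,\vec v)=\frac{\Gamma(\vec u,\vec v)}{\ell_n^2}+r_{n,1}(\vec u,\vec v),$$ where $\sup_{\vec u,\vec v\in[0,1]^d}|r_{n,1}(\vec u,\vec v)|=o(\ell_n^{-2})$ and $\Gamma(\vec u,\vec v)=\frac{\varphi''(0)}2\sum_{k=-\infty}^{\infty}k^2\gamma(k,\vec u,\vec v)$ with $\gamma(k,\vec u,\vec v)=\mathrm{Cov}\{\mathbf 1(\vec U_0\le\vec u),\mathbf 1(\vec U_k\le\vec v)\}$.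
   Context: Strong mixing coefficients: $\alpha_r=\sup_p\sup_{A\in\mathcal F_{-\infty}^p,B\in\mathcal F_{p+r}^\infty}|P(A\cap B)-P(A)P(B)|$, $\mathcal F_a^b=\sigma(\vec U_i:a\le i\le b)$. $\sigma_C(\vec u,\vec v)=\mathrm{Cov}\{\mathbb{B}_C(1,\vec u),\mathbb{B}_C(1,\vec v)\}$, where $\mathbb{B}_C$ is the weak limit in $\ell^\infty([0,1]^{d+1})$ of the sequential empirical process $\tilde{\mathbb{B}}_n(s,\vec u)=n^{-1/2}\sum_{i=1}^{\lfloor ns\rfloor}\{\mathbf 1(\vec U_i\le\vec u)-C(\vec u)\}$ (equivalently $\sigma_C(\vec u,\vec v)=\sum_{k\in\mathbb{Z}}\gamma(k,\vec u,\vec v)$). *)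

theory Defs
  imports "HOL-Probability.Probability" "HOL-Library.Landau_Symbols"
begin

definition ind_le :: "real^'d \<Rightarrow> real^'d \<Rightarrow> real" where
  "ind_le x u = (if (\<forall>j. x $ j \<le> u $ j) then 1 else 0)"

definition unit_cube :: "(real^'d) set" where
  "unit_cube = {u. \<forall>j. 0 \<le> u $ j \<and> u $ j \<le> 1}"

definition gen_sigma :: "'a measure \<Rightarrow> (int \<Rightarrow> 'a \<Rightarrow> real^'d) \<Rightarrow> int set \<Rightarrow> 'a set set" where
  "gen_sigma M U I = sigma_sets (space M) {U i -` B \<inter> space M | i B. i \<in> I \<and> B \<in> sets borel}"

definition alpha_mix :: "'a measure \<Rightarrow> (int \<Rightarrow> 'a \<Rightarrow> real^'d) \<Rightarrow> nat \<Rightarrow> real" where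
  "alpha_mix M U r = Sup {\<bar>measure M (A \<inter> B) - measure M A * measure M B\<bar> | p A B.
      A \<in> gen_sigma M U {..p} \<and> B \<in> gen_sigma M U {p + int r..}}"

definition strictly_stationary :: "'a measure \<Rightarrow> (int \<Rightarrow> 'a \<Rightarrow> real^'d) \<Rightarrow> bool" where
  "strictly_stationary M U \<longleftrightarrow> (\<forall>I h. finite I \<longrightarrow>
      distr M (PiM I (\<lambda>_. borel)) (\<lambda>\<omega>. \<lambda>i\<in>I. U i \<omega>)
    = distr M (PiM I (\<lambda>_. borel)) (\<lambda>\<omega>. \<lambda>i\<in>I. U (i + h) \<omega>))"

definition cov :: "'a measure \<Rightarrow> ('a \<Rightarrow> real) \<Rightarrow> ('a \<Rightarrow> real) \<Rightarrow> real" where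
  "cov M X Y = integral\<^sup>L M (\<lambda>\<omega>. (X \<omega> - integral\<^sup>L M X) * (Y \<omega> - integral\<^sup>L M Y))"

definition gamma_cov :: "'a measure \<Rightarrow> (int \<Rightarrow> 'a \<Rightarrow> real^'d) \<Rightarrow> int \<Rightarrow> real^'d \<Rightarrow> real^'d \<Rightarrow> real" where
  "gamma_cov M U k u v = cov M (\<lambda>\<omega>. ind_le (U 0 \<omega>) u) (\<lambda>\<omega>. ind_le (U k \<omega>) v)"

definition sigma_C :: "'a measure \<Rightarrow> (int \<Rightarrow> 'a \<Rightarrow> real^'d) \<Rightarrow> real^'d \<Rightarrow> real^'d \<Rightarrow> real" where
  "sigma_C M U u v = (\<Sum>\<^sub>\<infinity>k\<in>(UNIV::int set). gamma_cov M U k u v)"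

definition sigma_tilde :: "(real \<Rightarrow> real) \<Rightarrow> real \<Rightarrow> (real^'d \<Rightarrow> real) \<Rightarrow> (int \<Rightarrow> 'a \<Rightarrow> real^'d)
     \<Rightarrow> nat \<Rightarrow> real^'d \<Rightarrow> real^'d \<Rightarrow> 'a \<Rightarrow> real" where
  "sigma_tilde \<phi> l C U n u v \<omega> = (1 / real n) *
     (\<Sum>i\<in>{1..int n}. \<Sum>j\<in>{1..int n}. \<phi> (real_of_int (i - j) / l)
        * (ind_le (U i \<omega>) u - C u) * (ind_le (U j \<omega>) v - C v))"

end

theory Submission
  imports Defs
begin

text \<open>
  By stationarity, \<open>E \<sigma>\<^sub>n(u,v) = n\<^sup>-\<^sup>1 \<Sum>\<^sub>i\<^sub>,\<^sub>j \<phi>((i-j)/\<ell>\<^sub>n) \<gamma>(j-i)\<close>, and the mixing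
  rate gives \<open>|\<gamma>(k,u,v)| \<le> \<alpha>\<^sub>|\<^sub>k\<^sub>|\<close> with \<open>\<Sum> k\<^sup>2 \<alpha>\<^sub>|\<^sub>k\<^sub>| < \<infinity>\<close>, uniformly in \<open>u, v\<close>.
  Replacing the finite double sum by the full lag-window sum \<open>\<Sum>\<^sub>k \<phi>(k/\<ell>\<^sub>n) \<gamma>(k)\<close>
  changes it by \<open>O(1/n)\<close> (the lags missed by row \<open>i\<close> all exceed \<open>min(i, n+1-i)\<close>),
  which is \<open>o(\<ell>\<^sub>n\<^sup>-\<^sup>2)\<close> because \<open>\<ell>\<^sub>n\<^sup>2 = O(n\<^sup>1\<^sup>-\<^sup>2\<^sup>\<epsilon>)\<close>.
  The remaining bias is \<open>\<Sum>\<^sub>k {\<phi>(k/\<ell>\<^sub>n) - 1} \<gamma>(k) = \<phi>''(0)/(2\<ell>\<^sub>n\<^sup>2) \<Sum> k\<^sup>2 \<gamma>(k) + \<Sum>\<^sub>k \<rho>(k/\<ell>\<^sub>n) \<gamma>(k)\<close>,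
  where \<open>\<rho>(x) = \<phi>(x) - 1 - \<phi>''(0) x\<^sup>2/2\<close> is \<open>o(x\<^sup>2)\<close> at \<open>0\<close> by Taylor's theorem
  (\<open>\<phi>'(0) = 0\<close> by evenness) and \<open>O(x\<^sup>2)\<close> everywhere since \<open>\<phi>\<close> is bounded.
  Splitting the last sum at a fixed window \<open>|k| \<le> N\<close> shows that
  \<open>\<ell>\<^sub>n\<^sup>2 \<Sum>\<^sub>k \<rho>(k/\<ell>\<^sub>n) \<gamma>(k) \<rightarrow> 0\<close>.
\<close>

section \<open>Sums over the integers\<close>

lemma summable_on_int_abs_of_summable:
  fixes h :: "nat \<Rightarrow> real"
  assumes "summable h" "\<And>n. h n \<ge> 0"
  shows "(\<lambda>k::int. h (nat \<bar>k\<bar>)) summable_on UNIV"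
proof -
  have hs: "h summable_on UNIV" using summable_nonneg_imp_summable_on assms by blast
  have pos: "(\<lambda>k::int. h (nat \<bar>k\<bar>)) summable_on (range int)"
    by (subst summable_on_reindex) (auto simp: o_def hs inj_on_def)
  have neg: "(\<lambda>k::int. h (nat \<bar>k\<bar>)) summable_on (range (\<lambda>n. - int n))"
    by (subst summable_on_reindex) (auto simp: o_def hs inj_on_def)
  have "UNIV = range int \<union> range (\<lambda>n. - int n)"
  proof (intro set_eqI iffI)
    fix x :: int
    show "x \<in> range int \<union> range (\<lambda>n. - int n)"
      by (cases "x \<ge> 0") (auto intro!: image_eqI[of _ _ "nat \<bar>x\<bar>"])
  qed auto
  then show ?thesis using summable_on_union[OF pos neg] by simp
qed

lemma summable_on_dominated:
  fixes f D :: "'a \<Rightarrow> real"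
  assumes "D summable_on A" "\<And>k. k \<in> A \<Longrightarrow> \<bar>f k\<bar> \<le> D k"
  shows "f summable_on A"
proof -
  have "(\<lambda>x. norm (D x)) summable_on A" using assms(1) summable_on_iff_abs_summable_on_real by blast
  then have "(\<lambda>x. norm (f x)) summable_on A"
    by (rule Infinite_Sum.abs_summable_on_comparison_test) (use assms(2) in force)
  then show ?thesis using summable_on_iff_abs_summable_on_real by blast
qed

lemma abs_infsum_le_dominating:
  fixes f D :: "'a \<Rightarrow> real"
  assumes "D summable_on A" "\<And>k. k \<in> A \<Longrightarrow> \<bar>f k\<bar> \<le> D k"
  shows "\<bar>infsum f A\<bar> \<le> infsum D A"
proof -
  have abs_summable: "(\<lambda>k. \<bar>f k\<bar>) summable_on A"
    by (rule summable_on_dominated[OF assms(1)]) (use assms(2) in auto)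
  then have "norm (infsum f A) \<le> infsum (\<lambda>k. norm (f k)) A" by (intro norm_infsum_bound) simp
  also have "\<dots> \<le> infsum D A" by (rule infsum_mono) (use abs_summable assms in auto)
  finally show ?thesis by simp
qed

lemma infsum_split_finite:
  fixes f :: "'a \<Rightarrow> real"
  assumes "f summable_on UNIV" "finite F"
  shows "infsum f UNIV = sum f F + infsum f (- F)"
proof -
  have "f summable_on (- F)" using assms(1) by (rule summable_on_subset) auto
  then have "infsum f (F \<union> - F) = infsum f F + infsum f (- F)"
    by (intro infsum_Un_disjoint) (use assms in auto)
  then show ?thesis using assms(2) by simp
qed

lemma summable_on_diff_real:
  fixes f g :: "'a \<Rightarrow> real"
  assumes "f summable_on A" "g summable_on A"
  shows "(\<lambda>x. f x - g x) summable_on A"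
  using summable_on_add[OF assms(1) summable_on_uminus[THEN iffD2, OF assms(2)]] by simp

lemma infsum_diff_real:
  fixes f g :: "'a \<Rightarrow> real"
  assumes "f summable_on A" "g summable_on A"
  shows "infsum (\<lambda>x. f x - g x) A = infsum f A - infsum g A"
  using infsum_add[OF assms(1) summable_on_uminus[THEN iffD2, OF assms(2)]] infsum_uminus[of g A] by simp

lemma infsum_two_level_weights_le:
  fixes H :: "'a \<Rightarrow> real"
  assumes H0: "\<And>k. H k \<ge> 0" and HS: "H summable_on UNIV" and F: "finite F"
    and \<delta>: "\<delta> \<ge> 0" and R: "R \<ge> 0"
  shows "(\<lambda>k. (if k \<in> F then \<delta> else R) * H k) summable_on UNIV"
    and "infsum (\<lambda>k. (if k \<in> F then \<delta> else R) * H k) UNIV \<le> \<delta> * infsum H UNIV + R * infsum H (- F)"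
proof -
  define E where "E = (\<lambda>k. (if k \<in> F then \<delta> else R) * H k)"
  show ES: "E summable_on UNIV"
    by (rule summable_on_dominated[where D = "\<lambda>k. (\<delta> + R) * H k"])
      (use HS H0 \<delta> R in \<open>auto simp: E_def intro: summable_on_cmult_right mult_right_mono\<close>)
  have tail0: "infsum H (- F) \<ge> 0" by (rule infsum_nonneg) (use H0 in auto)
  have "infsum E UNIV = sum E F + infsum E (- F)" by (rule infsum_split_finite[OF ES F])
  also have "sum E F = \<delta> * sum H F" by (simp add: E_def sum_distrib_left)
  also have "infsum E (- F) = infsum (\<lambda>k. R * H k) (- F)" by (rule infsum_cong) (simp add: E_def)
  also have "\<dots> = R * infsum H (- F)" by (rule infsum_cmult_right')
  also have "sum H F \<le> infsum H UNIV"
    using infsum_split_finite[OF HS F] tail0 by linarith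
  then have "\<delta> * sum H F \<le> \<delta> * infsum H UNIV" using \<delta> by (rule mult_left_mono)
  finally show "infsum E UNIV \<le> \<delta> * infsum H UNIV + R * infsum H (- F)" by simp
qed

lemma infsum_outside_symmetric_window_le:
  fixes H :: "int \<Rightarrow> real"
  assumes H0: "\<And>k. H k \<ge> 0" and HS: "H summable_on UNIV" and \<epsilon>: "\<epsilon> > 0"
  obtains N :: nat where "infsum H (- {- int N..int N}) \<le> \<epsilon>"
proof -
  obtain F where F: "finite F" "dist (sum H F) (infsum H UNIV) \<le> \<epsilon>"
    using infsum_finite_approximation[OF HS \<epsilon>] by blast
  define N where "N = nat (\<Sum>k\<in>F. \<bar>k\<bar>)"
  have "F \<subseteq> {- int N..int N}"
  proof
    fix k assume "k \<in> F"
    then have "\<bar>k\<bar> \<le> (\<Sum>k\<in>F. \<bar>k\<bar>)" by (intro member_le_sum) (use F in auto)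
    then show "k \<in> {- int N..int N}" unfolding N_def by auto
  qed
  then have "sum H F \<le> sum H {- int N..int N}" by (intro sum_mono2) (use H0 in auto)
  moreover have "infsum H UNIV = sum H {- int N..int N} + infsum H (- {- int N..int N})"
    by (rule infsum_split_finite[OF HS]) simp
  ultimately show ?thesis using F(2) by (intro that[of N]) (simp add: dist_real_def)
qed

lemma sum_inverse_squares_le:
  assumes "n \<ge> 1"
  shows "(\<Sum>i\<in>{1..int n}. 1 / (real_of_int i)^2) \<le> 2 - 1 / real n"
  using assms
proof (induction n rule: dec_induct)
  case (step n)
  have n0: "real n > 0" using step(1) by simp
  have "{1..int (Suc n)} = insert (int n + 1) {1..int n}" by auto
  then have "(\<Sum>i\<in>{1..int (Suc n)}. 1 / (real_of_int i)^2)
      = 1 / (real n + 1)^2 + (\<Sum>i\<in>{1..int n}. 1 / (real_of_int i)^2)"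
    by (simp add: add.commute)
  also have "\<dots> \<le> 1 / (real n + 1)^2 + (2 - 1 / real n)" using step(3) by simp
  also have "1 / (real n + 1)^2 \<le> 1 / (real n * (real n + 1))"
    using n0 by (intro divide_left_mono) (auto simp: power2_eq_square)
  also have "1 / (real n * (real n + 1)) = 1 / real n - 1 / real (Suc n)"
    using n0 by (simp add: field_simps)
  finally show ?case by simp
qed simp

lemma sum_inverse_squares_le_2: "(\<Sum>i\<in>{1..int n}. 1 / (real_of_int i)^2) \<le> 2"
proof (cases "n \<ge> 1")
  case True
  then show ?thesis using sum_inverse_squares_le[OF True] by (smt (verit) divide_nonneg_nonneg of_nat_0_le_iff)
qed simp

lemma sum_atLeastAtMost_int_reflect:
  "(\<Sum>i\<in>{1..int n}. f (int n + 1 - i)) = (\<Sum>i\<in>{1..int n}. f i)"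
  by (rule sum.reindex_bij_witness[of _ "\<lambda>i. int n + 1 - i" "\<lambda>i. int n + 1 - i"]) auto

lemma le_inverse_square_mult_square:
  fixes k m :: int and y :: real
  assumes m: "1 \<le> m" "m \<le> \<bar>k\<bar>" and y: "y \<ge> 0"
  shows "y \<le> 1 / (real_of_int m)^2 * ((real_of_int k)^2 * y)"
proof -
  have "real_of_int m \<le> \<bar>real_of_int k\<bar>" using m(2) by linarith
  then have "(real_of_int m)^2 \<le> \<bar>real_of_int k\<bar>^2" using m(1) by (intro power_mono) auto
  then have "1 \<le> (real_of_int k)^2 / (real_of_int m)^2" using m(1) by simp
  then have "1 * y \<le> (real_of_int k)^2 / (real_of_int m)^2 * y" using y by (rule mult_right_mono)
  then show ?thesis by simp
qed

lemma infsum_outside_window_le: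
  fixes G :: "int \<Rightarrow> real" and n :: nat and i :: int
  assumes G0: "\<And>k. G k \<ge> 0"
    and HS: "(\<lambda>k. (real_of_int k)^2 * G k) summable_on UNIV"
    and i: "1 \<le> i" "i \<le> int n"
  shows "infsum G (- {1 - i..int n - i}) \<le> infsum (\<lambda>k. (real_of_int k)^2 * G k) UNIV
            * (1 / (real_of_int i)^2 + 1 / (real_of_int (int n + 1 - i))^2)"
proof -
  define c where "c = 1 / (real_of_int i)^2 + 1 / (real_of_int (int n + 1 - i))^2"
  define H where "H = (\<lambda>k. (real_of_int k)^2 * G k)"
  define W where "W = - {1 - i..int n - i}"
  have c0: "c \<ge> 0" unfolding c_def by simp
  have bnd: "G k \<le> c * H k" if "k \<in> W" for k
  proof -
    obtain m where m: "m \<ge> 1" "\<bar>k\<bar> \<ge> m" "1 / (real_of_int m)^2 \<le> c"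
    proof (cases "k \<le> - i")
      case True
      then show ?thesis using that[of i] i unfolding c_def by auto
    next
      case False
      then have "k \<ge> int n + 1 - i" using \<open>k \<in> W\<close> unfolding W_def by auto
      then show ?thesis using that[of "int n + 1 - i"] i unfolding c_def by auto
    qed
    have "G k \<le> 1 / (real_of_int m)^2 * H k"
      unfolding H_def by (rule le_inverse_square_mult_square[OF m(1,2) G0])
    also have "\<dots> \<le> c * H k" using m(3) G0[of k] unfolding H_def by (intro mult_right_mono) auto
    finally show ?thesis .
  qed
  have HS': "H summable_on W" using HS unfolding H_def by (rule summable_on_subset) auto
  have GS: "G summable_on W"
    by (rule summable_on_dominated[where D = "\<lambda>k. c * H k"])
      (use HS' bnd G0 in \<open>auto intro: summable_on_cmult_right\<close>)
  have "infsum G W \<le> infsum (\<lambda>k. c * H k) W"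
    by (rule infsum_mono) (use GS HS' bnd in \<open>auto intro: summable_on_cmult_right\<close>)
  also have "\<dots> = c * infsum H W" by (rule infsum_cmult_right) (use HS' in simp)
  also have "infsum H W \<le> infsum H UNIV"
    by (rule infsum_mono2) (use HS' HS G0 in \<open>auto simp: H_def\<close>)
  then have "c * infsum H W \<le> c * infsum H UNIV" using c0 by (rule mult_left_mono)
  finally show ?thesis unfolding c_def H_def W_def by (simp add: mult.commute)
qed

section \<open>Lag-window averages\<close>

lemma lag_window_row_sum_approx:
  fixes w G :: "int \<Rightarrow> real"
  assumes G0: "\<And>k. G k \<ge> 0" and GS: "G summable_on UNIV"
    and HS: "(\<lambda>k. (real_of_int k)^2 * G k) summable_on UNIV"
    and wG: "\<And>k. \<bar>w k\<bar> \<le> G k"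
    and i: "1 \<le> i" "i \<le> int n"
  shows "\<bar>(\<Sum>j\<in>{1..int n}. w (j - i)) - infsum w UNIV\<bar>
       \<le> infsum (\<lambda>k. (real_of_int k)^2 * G k) UNIV
            * (1 / (real_of_int i)^2 + 1 / (real_of_int (int n + 1 - i))^2)"
proof -
  have "(\<Sum>j\<in>{1..int n}. w (j - i)) = sum w {1 - i..int n - i}"
    by (rule sum.reindex_bij_witness[of _ "\<lambda>k. k + i" "\<lambda>j. j - i"]) auto
  moreover have "infsum w UNIV = sum w {1 - i..int n - i} + infsum w (- {1 - i..int n - i})"
    by (rule infsum_split_finite) (use summable_on_dominated[OF GS] wG in auto)
  moreover have "\<bar>infsum w (- {1 - i..int n - i})\<bar> \<le> infsum G (- {1 - i..int n - i})"
    by (rule abs_infsum_le_dominating) (use GS wG in \<open>auto intro: summable_on_subset\<close>)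
  ultimately show ?thesis using infsum_outside_window_le[OF G0 HS i] by simp
qed

lemma lag_window_average_approx:
  fixes w G :: "int \<Rightarrow> real"
  assumes G0: "\<And>k. G k \<ge> 0" and GS: "G summable_on UNIV"
    and HS: "(\<lambda>k. (real_of_int k)^2 * G k) summable_on UNIV"
    and wG: "\<And>k. \<bar>w k\<bar> \<le> G k"
    and n: "n \<ge> 1"
  shows "\<bar>(1 / real n) * (\<Sum>i\<in>{1..int n}. \<Sum>j\<in>{1..int n}. w (j - i)) - infsum w UNIV\<bar>
       \<le> 4 * infsum (\<lambda>k. (real_of_int k)^2 * G k) UNIV / real n"
proof -
  define K where "K = infsum (\<lambda>k. (real_of_int k)^2 * G k) UNIV"
  define S where "S = (\<Sum>i\<in>{1..int n}. 1 / (real_of_int i)^2)"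
  define X where "X = (\<Sum>i\<in>{1..int n}. \<Sum>j\<in>{1..int n}. w (j - i))"
  define W where "W = infsum w UNIV"
  have K0: "K \<ge> 0" unfolding K_def by (rule infsum_nonneg) (use G0 in auto)
  have n0: "real n > 0" using n by simp
  have "X - real n * W = (\<Sum>i\<in>{1..int n}. (\<Sum>j\<in>{1..int n}. w (j - i)) - W)"
    unfolding X_def by (simp add: sum_subtractf)
  also have "\<bar>\<dots>\<bar> \<le> (\<Sum>i\<in>{1..int n}. K * (1 / (real_of_int i)^2 + 1 / (real_of_int (int n + 1 - i))^2))"
    by (rule order.trans[OF sum_abs sum_mono])
      (use lag_window_row_sum_approx[OF G0 GS HS wG] in \<open>auto simp: K_def W_def\<close>)
  also have "\<dots> = K * (S + (\<Sum>i\<in>{1..int n}. 1 / (real_of_int (int n + 1 - i))^2))"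
    unfolding S_def by (simp only: sum_distrib_left sum.distrib distrib_left)
  also have "(\<Sum>i\<in>{1..int n}. 1 / (real_of_int (int n + 1 - i))^2) = S"
    unfolding S_def by (rule sum_atLeastAtMost_int_reflect)
  also have "K * (S + S) \<le> 4 * K"
    using mult_left_mono[OF sum_inverse_squares_le_2[of n] K0] unfolding S_def by simp
  finally have "\<bar>X - real n * W\<bar> / real n \<le> 4 * K / real n"
    using n0 by (rule divide_right_mono[OF _ less_imp_le])
  moreover have "(1 / real n) * X - W = (X - real n * W) / real n"
    using n0 by (simp add: diff_divide_distrib)
  ultimately have "\<bar>(1 / real n) * X - W\<bar> \<le> 4 * K / real n"
    by (simp only: abs_div_pos[OF n0])
  then show ?thesis unfolding K_def X_def W_def .
qed

section \<open>Second-order behaviour of the kernel\<close>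

lemma has_real_derivative_even_at_0:
  fixes f :: "real \<Rightarrow> real"
  assumes even: "\<And>x. f (- x) = f x" and D: "(f has_real_derivative D) (at 0)"
  shows "D = 0"
proof -
  have "(f has_real_derivative D) (at (- 0))" using D by simp
  from DERIV_chain2[OF this DERIV_minus[OF DERIV_ident]]
  have "((\<lambda>x. f (- x)) has_real_derivative D * - 1) (at 0)" .
  moreover have "(\<lambda>x. f (- x)) = f" using even by auto
  ultimately have "(f has_real_derivative - D) (at 0)" by simp
  from DERIV_unique[OF D this] show ?thesis by simp
qed

lemma taylor2_at_0:
  fixes f f' f'' :: "real \<Rightarrow> real"
  assumes x: "0 < x"
    and D1: "\<And>t. 0 \<le> t \<Longrightarrow> t \<le> x \<Longrightarrow> (f has_real_derivative f' t) (at t)"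
    and D2: "\<And>t. 0 \<le> t \<Longrightarrow> t \<le> x \<Longrightarrow> (f' has_real_derivative f'' t) (at t)"
  obtains t where "0 < t" "t < x" "f x = f 0 + f' 0 * x + f'' t / 2 * x^2"
proof -
  define diff where "diff = (\<lambda>m::nat. if m = 0 then f else if m = 1 then f' else f'')"
  have "\<exists>t. 0 < t \<and> t < x \<and> f x = (\<Sum>m<2. diff m 0 / fact m * x ^ m) + diff 2 t / fact 2 * x ^ 2"
  proof (rule Maclaurin)
    show "\<forall>m t. m < 2 \<and> 0 \<le> t \<and> t \<le> x \<longrightarrow> (diff m has_real_derivative diff (Suc m) t) (at t)"
    proof (intro allI impI)
      fix m t assume mt: "m < (2::nat) \<and> 0 \<le> t \<and> t \<le> x"
      then have "m = 0 \<or> m = 1" by auto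
      then show "(diff m has_real_derivative diff (Suc m) t) (at t)"
        using D1[of t] D2[of t] mt by (auto simp: diff_def)
    qed
  qed (use x in \<open>simp_all add: diff_def\<close>)
  then obtain t where "0 < t" "t < x" "f x = f 0 + f' 0 * x + f'' t / 2 * x^2"
    by (auto simp: diff_def numeral_2_eq_2)
  then show ?thesis by (rule that)
qed

lemma even_kernel_taylor:
  fixes \<phi> \<phi>' \<phi>'' :: "real \<Rightarrow> real"
  assumes phi_sym: "\<And>x. \<phi> (- x) = \<phi> x"
    and phi0: "\<phi> 0 = 1"
    and phi_d1: "\<And>x. x \<in> {-1..1} \<Longrightarrow> (\<phi> has_real_derivative \<phi>' x) (at x within {-1..1})"
    and phi_d2: "\<And>x. x \<in> {-1..1} \<Longrightarrow> (\<phi>' has_real_derivative \<phi>'' x) (at x within {-1..1})"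
    and phi_cont: "continuous_on {-1..1} \<phi>''"
    and \<delta>: "\<delta> > 0"
  shows "\<exists>\<eta>>0. \<forall>x. \<bar>x\<bar> < \<eta> \<longrightarrow> \<bar>\<phi> x - 1 - \<phi>'' 0 / 2 * x^2\<bar> \<le> \<delta> * x^2"
proof -
  have interior: "at x within {-1..1} = at x" if "\<bar>x\<bar> < 1" for x :: real
    using that by (intro at_within_interior) auto
  have D1: "(\<phi> has_real_derivative \<phi>' x) (at x)" and D2: "(\<phi>' has_real_derivative \<phi>'' x) (at x)"
    if "\<bar>x\<bar> < 1" for x
    using phi_d1[of x] phi_d2[of x] interior[OF that] that by (auto simp: abs_less_iff)
  have d10: "\<phi>' 0 = 0" using has_real_derivative_even_at_0[OF phi_sym D1[of 0]] by simp
  have "isCont \<phi>'' 0" using phi_cont by (rule continuous_on_interior) auto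
  then obtain \<eta>0 where \<eta>0: "\<eta>0 > 0" "\<And>t. \<bar>t\<bar> < \<eta>0 \<Longrightarrow> \<bar>\<phi>'' t - \<phi>'' 0\<bar> < 2 * \<delta>"
    using \<delta> unfolding continuous_at_eps_delta dist_real_def by (metis diff_zero mult_pos_pos zero_less_numeral)
  define \<eta> where "\<eta> = min \<eta>0 1"
  have pos: "\<bar>\<phi> x - 1 - \<phi>'' 0 / 2 * x^2\<bar> \<le> \<delta> * x^2" if x: "0 < x" "x < \<eta>" for x
  proof -
    obtain t where t: "0 < t" "t < x" "\<phi> x = 1 + \<phi>'' t / 2 * x^2"
      by (rule taylor2_at_0[of x \<phi> \<phi>' \<phi>'']) (use x D1 D2 phi0 d10 in \<open>auto simp: \<eta>_def\<close>)
    have "\<bar>\<phi>'' t / 2 - \<phi>'' 0 / 2\<bar> \<le> \<delta>" using \<eta>0(2)[of t] t x unfolding \<eta>_def by auto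
    then have "\<bar>\<phi>'' t / 2 - \<phi>'' 0 / 2\<bar> * x^2 \<le> \<delta> * x^2" by (intro mult_right_mono) auto
    moreover have "\<phi> x - 1 - \<phi>'' 0 / 2 * x^2 = (\<phi>'' t / 2 - \<phi>'' 0 / 2) * x^2"
      using t(3) by (simp add: algebra_simps)
    ultimately show ?thesis by (simp add: abs_mult)
  qed
  have "\<bar>\<phi> x - 1 - \<phi>'' 0 / 2 * x^2\<bar> \<le> \<delta> * x^2" if "\<bar>x\<bar> < \<eta>" for x
  proof -
    consider "x = 0" | "0 < x" | "0 < - x" by linarith
    then show ?thesis
      using pos[of x] pos[of "- x"] that phi0 phi_sym[of x] by cases auto
  qed
  moreover have "\<eta> > 0" using \<eta>0 unfolding \<eta>_def by auto
  ultimately show ?thesis by blast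
qed

lemma bounded_kernel_quadratic_remainder_bound:
  fixes \<phi> :: "real \<Rightarrow> real"
  assumes phi_range: "\<And>x. 0 \<le> \<phi> x \<and> \<phi> x \<le> 1"
    and small: "\<forall>\<delta>>0. \<exists>\<eta>>0. \<forall>x. \<bar>x\<bar> < \<eta> \<longrightarrow> \<bar>\<phi> x - 1 - c * x^2\<bar> \<le> \<delta> * x^2"
  obtains R where "\<And>x. \<bar>\<phi> x - 1 - c * x^2\<bar> \<le> R * x^2"
proof -
  obtain \<eta> where \<eta>: "\<eta> > 0" and local: "\<And>x. \<bar>x\<bar> < \<eta> \<Longrightarrow> \<bar>\<phi> x - 1 - c * x^2\<bar> \<le> 1 * x^2"
    using small zero_less_one by blast
  have "\<bar>\<phi> x - 1 - c * x^2\<bar> \<le> (1 + 1 / \<eta>^2 + \<bar>c\<bar>) * x^2" for x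
  proof (cases "\<bar>x\<bar> < \<eta>")
    case True
    then have "\<bar>\<phi> x - 1 - c * x^2\<bar> \<le> 1 * x^2" by (rule local)
    also have "\<dots> \<le> (1 + 1 / \<eta>^2 + \<bar>c\<bar>) * x^2" by (intro mult_right_mono) auto
    finally show ?thesis .
  next
    case False
    then have "\<eta>^2 \<le> x^2" using \<eta> by (metis abs_le_square_iff abs_of_pos not_less)
    then have "1 \<le> x^2 / \<eta>^2" using \<eta> by (simp add: field_simps)
    have "\<bar>c * x^2\<bar> = \<bar>c\<bar> * x^2" by (simp add: abs_mult)
    then have "\<bar>\<phi> x - 1 - c * x^2\<bar> \<le> \<bar>\<phi> x - 1\<bar> + \<bar>c\<bar> * x^2" by linarith
    also have "\<bar>\<phi> x - 1\<bar> \<le> 1" using phi_range[of x] by auto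
    also have "1 \<le> x^2 / \<eta>^2" by fact
    also have "x^2 / \<eta>^2 + \<bar>c\<bar> * x^2 \<le> (1 + 1 / \<eta>^2 + \<bar>c\<bar>) * x^2" by (simp add: field_simps)
    finally show ?thesis by simp
  qed
  then show ?thesis by (rule that)
qed

section \<open>Bias of the lag-window sum\<close>

lemma lag_window_sum_expansion:
  fixes g G :: "int \<Rightarrow> real" and \<phi> :: "real \<Rightarrow> real"
  assumes GS: "G summable_on UNIV" and HS: "(\<lambda>k. (real_of_int k)^2 * G k) summable_on UNIV"
    and gG: "\<And>k. \<bar>g k\<bar> \<le> G k"
    and phi_range: "\<And>x. 0 \<le> \<phi> x \<and> \<phi> x \<le> 1"
    and l: "l > 0"
  shows "infsum (\<lambda>k. \<phi> (real_of_int k / l) * g k) UNIV - infsum g UNIV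
           - c * infsum (\<lambda>k. (real_of_int k)^2 * g k) UNIV / l^2
       = infsum (\<lambda>k. (\<phi> (real_of_int k / l) - 1 - c * (real_of_int k / l)^2) * g k) UNIV"
proof -
  define w where "w = (\<lambda>k. \<phi> (real_of_int k / l) * g k)"
  define q where "q = (\<lambda>k. c / l^2 * ((real_of_int k)^2 * g k))"
  have wG: "\<bar>w k\<bar> \<le> G k" for k
  proof -
    have "\<bar>w k\<bar> = \<phi> (real_of_int k / l) * \<bar>g k\<bar>" using phi_range by (simp add: w_def abs_mult)
    also have "\<dots> \<le> \<bar>g k\<bar>" using phi_range by (simp add: mult_left_le_one_le)
    finally show ?thesis using gG[of k] by linarith
  qed
  have wS: "w summable_on UNIV" by (rule summable_on_dominated[OF GS wG])
  have gS: "g summable_on UNIV" by (rule summable_on_dominated[OF GS gG])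
  have "\<bar>(real_of_int k)^2 * g k\<bar> \<le> (real_of_int k)^2 * G k" for k
    using gG[of k] by (simp add: abs_mult mult_left_mono)
  then have qS: "q summable_on UNIV"
    unfolding q_def by (intro summable_on_cmult_right summable_on_dominated[OF HS])
  have "c * (real_of_int k / l)^2 * g k = q k" for k
    using l by (simp add: q_def power_divide)
  then have "(\<lambda>k. (\<phi> (real_of_int k / l) - 1 - c * (real_of_int k / l)^2) * g k) = (\<lambda>k. w k - g k - q k)"
    by (simp add: w_def left_diff_distrib)
  then have "infsum (\<lambda>k. (\<phi> (real_of_int k / l) - 1 - c * (real_of_int k / l)^2) * g k) UNIV
      = infsum (\<lambda>k. w k - g k) UNIV - infsum q UNIV"
    using infsum_diff_real[OF summable_on_diff_real[OF wS gS] qS] by simp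
  also have "infsum (\<lambda>k. w k - g k) UNIV = infsum w UNIV - infsum g UNIV"
    by (rule infsum_diff_real[OF wS gS])
  also have "infsum q UNIV = c * infsum (\<lambda>k. (real_of_int k)^2 * g k) UNIV / l^2"
    unfolding q_def by (subst infsum_cmult_right') simp
  finally show ?thesis unfolding w_def by simp
qed

lemma lag_window_remainder_le:
  fixes \<rho> :: "real \<Rightarrow> real" and g G :: "int \<Rightarrow> real" and N :: nat
  assumes G0: "\<And>k. G k \<ge> 0"
    and HS: "(\<lambda>k. (real_of_int k)^2 * G k) summable_on UNIV"
    and gG: "\<And>k. \<bar>g k\<bar> \<le> G k"
    and local: "\<And>x. \<bar>x\<bar> < \<eta> \<Longrightarrow> \<bar>\<rho> x\<bar> \<le> \<delta> * x^2" and \<delta>: "\<delta> \<ge> 0"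
    and bound: "\<And>x. \<bar>\<rho> x\<bar> \<le> R * x^2"
    and \<eta>: "\<eta> > 0" and Nl: "real N < \<eta> * l"
  shows "l^2 * \<bar>infsum (\<lambda>k. \<rho> (real_of_int k / l) * g k) UNIV\<bar>
       \<le> \<delta> * infsum (\<lambda>k. (real_of_int k)^2 * G k) UNIV
         + R * infsum (\<lambda>k. (real_of_int k)^2 * G k) (- {- int N..int N})"
proof -
  define H where "H = (\<lambda>k. (real_of_int k)^2 * G k)"
  define F where "F = {- int N..int N}"
  define E where "E = (\<lambda>k. (if k \<in> F then \<delta> else R) * H k)"
  have R0: "R \<ge> 0" using bound[of 1] abs_ge_zero[of "\<rho> 1"] by simp
  have l0: "l > 0" using Nl \<eta> by (smt (verit) zero_less_mult_pos of_nat_0_le_iff)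
  note weights = infsum_two_level_weights_le[of H, OF _ _ _ \<delta> R0, of F]
  have ES: "E summable_on UNIV" and sumE: "infsum E UNIV \<le> \<delta> * infsum H UNIV + R * infsum H (- F)"
    using weights G0 HS unfolding E_def H_def F_def by auto
  have weight: "\<bar>l^2 * (\<rho> (real_of_int k / l) * g k)\<bar> \<le> E k" for k
  proof -
    define D where "D = (if k \<in> F then \<delta> else R)"
    have "\<bar>\<rho> (real_of_int k / l)\<bar> \<le> D * (real_of_int k / l)^2"
    proof (cases "k \<in> F")
      case True
      then have "\<bar>real_of_int k\<bar> \<le> real N" by (auto simp: F_def)
      then have "\<bar>real_of_int k\<bar> / l < \<eta>" using Nl l0 by (simp add: pos_divide_less_eq)
      then have "\<bar>real_of_int k / l\<bar> < \<eta>" using l0 by (simp add: abs_divide)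
      then show ?thesis using True local by (simp add: D_def)
    qed (simp add: D_def bound)
    then have "l^2 * \<bar>\<rho> (real_of_int k / l)\<bar> * \<bar>g k\<bar> \<le> l^2 * (D * (real_of_int k / l)^2) * G k"
      using gG \<delta> R0 by (intro mult_mono mult_left_mono) (auto simp: D_def)
    also have "\<dots> = E k" using l0 by (simp add: E_def D_def H_def field_simps)
    finally show ?thesis by (simp add: abs_mult mult.assoc)
  qed
  have "l^2 * \<bar>infsum (\<lambda>k. \<rho> (real_of_int k / l) * g k) UNIV\<bar>
      = \<bar>infsum (\<lambda>k. l^2 * (\<rho> (real_of_int k / l) * g k)) UNIV\<bar>"
    by (simp add: infsum_cmult_right' abs_mult)
  also have "\<dots> \<le> infsum E UNIV" by (rule abs_infsum_le_dominating[OF ES weight])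
  finally show ?thesis using sumE unfolding H_def F_def by simp
qed

lemma lag_window_remainder_eventually_small:
  fixes \<rho> :: "real \<Rightarrow> real" and G :: "int \<Rightarrow> real"
  assumes G0: "\<And>k. G k \<ge> 0"
    and HS: "(\<lambda>k. (real_of_int k)^2 * G k) summable_on UNIV"
    and small: "\<forall>\<delta>>0. \<exists>\<eta>>0. \<forall>x. \<bar>x\<bar> < \<eta> \<longrightarrow> \<bar>\<rho> x\<bar> \<le> \<delta> * x^2"
    and bound: "\<And>x. \<bar>\<rho> x\<bar> \<le> R * x^2"
    and e: "e > 0"
  shows "\<forall>\<^sub>F l in at_top. \<forall>g. (\<forall>k. \<bar>g k\<bar> \<le> G k) \<longrightarrow>
           l^2 * \<bar>infsum (\<lambda>k. \<rho> (real_of_int k / l) * g k) UNIV\<bar> \<le> e"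
proof -
  define H where "H = (\<lambda>k. (real_of_int k)^2 * G k)"
  define K where "K = infsum H UNIV"
  have H0: "\<And>k. H k \<ge> 0" using G0 by (simp add: H_def)
  have HS': "H summable_on UNIV" using HS by (simp add: H_def)
  have K0: "K \<ge> 0" unfolding K_def by (rule infsum_nonneg) (use H0 in auto)
  have R0: "R \<ge> 0" using bound[of 1] abs_ge_zero[of "\<rho> 1"] by simp
  define \<delta> where "\<delta> = e / (2 * (K + 1))"
  define \<epsilon> where "\<epsilon> = e / (2 * (R + 1))"
  have \<delta>0: "\<delta> > 0" and \<epsilon>0: "\<epsilon> > 0" using e K0 R0 by (simp_all add: \<delta>_def \<epsilon>_def)
  have "\<delta> * K \<le> e / 2" "R * \<epsilon> \<le> e / 2"
    using e K0 R0 by (simp_all add: \<delta>_def \<epsilon>_def field_simps)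
  obtain \<eta> where \<eta>: "\<eta> > 0" "\<And>x. \<bar>x\<bar> < \<eta> \<Longrightarrow> \<bar>\<rho> x\<bar> \<le> \<delta> * x^2"
    using small \<delta>0 by blast
  obtain N :: nat where N: "infsum H (- {- int N..int N}) \<le> \<epsilon>"
    using infsum_outside_symmetric_window_le[OF H0 HS' \<epsilon>0] by blast
  then have "\<delta> * K + R * infsum H (- {- int N..int N}) \<le> e"
    using \<open>\<delta> * K \<le> e / 2\<close> \<open>R * \<epsilon> \<le> e / 2\<close> mult_left_mono[OF N R0] by linarith
  moreover have "\<forall>\<^sub>F l in at_top. real N < \<eta> * l"
    using eventually_gt_at_top[of "real N / \<eta>"]
    by (rule eventually_mono) (use \<eta>(1) in \<open>simp add: pos_divide_less_eq mult.commute\<close>)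
  ultimately show ?thesis
    using lag_window_remainder_le[OF G0 HS _ \<eta>(2) less_imp_le[OF \<delta>0] bound \<eta>(1)]
    unfolding K_def H_def by (auto elim!: eventually_mono intro: order.trans)
qed

lemma powr_square_div_self:
  fixes x b :: real
  assumes "x > 0"
  shows "(x powr b) ^ 2 / x = x powr (2 * b - 1)"
  using assms by (simp add: powr_power powr_diff)

lemma square_mult_powr:
  fixes x a :: real
  assumes "x \<ge> 0"
  shows "x^2 * x powr a = x powr (2 + a)"
proof (cases "x = 0")
  case False
  then show ?thesis using assms by (simp add: powr_add powr_numeral)
qed simp

lemma square_div_tendsto_0_of_bigo_powr:
  fixes ell :: "nat \<Rightarrow> real"
  assumes "ell \<in> O(\<lambda>n. real n powr (1/2 - \<epsilon>))" "\<epsilon> > 0"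
  shows "((\<lambda>n. ell n ^ 2 / real n) \<longlongrightarrow> 0) sequentially"
proof -
  have "(\<lambda>n. ell n ^ 2) \<in> O(\<lambda>n. (real n powr (1/2 - \<epsilon>)) ^ 2)"
    using assms(1) by (rule landau_o.big_power)
  then have "(\<lambda>n. ell n ^ 2 / real n) \<in> O(\<lambda>n. (real n powr (1/2 - \<epsilon>)) ^ 2 / real n)"
    by (intro landau_o.big.divide_right eventually_gt_at_top[of 0, THEN eventually_mono]) auto
  also have "(\<lambda>n. (real n powr (1/2 - \<epsilon>)) ^ 2 / real n) \<in> o(\<lambda>_. 1)"
  proof (rule smalloI_tendsto)
    have "((\<lambda>n. real n powr (2 * (1/2 - \<epsilon>) - 1)) \<longlongrightarrow> 0) sequentially"
      using assms(2) by (intro tendsto_neg_powr filterlim_real_sequentially) auto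
    moreover have "\<forall>\<^sub>F n in sequentially.
        real n powr (2 * (1/2 - \<epsilon>) - 1) = (real n powr (1/2 - \<epsilon>)) ^ 2 / real n / 1"
      using eventually_gt_at_top[of 0] by (rule eventually_mono) (simp add: powr_square_div_self)
    ultimately show "((\<lambda>n. (real n powr (1/2 - \<epsilon>)) ^ 2 / real n / 1) \<longlongrightarrow> 0) sequentially"
      by (rule Lim_transform_eventually)
  qed simp
  finally have "(\<lambda>n. ell n ^ 2 / real n) \<in> o(\<lambda>_. 1)" .
  from smalloD_tendsto[OF this] show ?thesis by simp
qed

lemma lag_window_bias_le:
  fixes \<phi> :: "real \<Rightarrow> real" and g G :: "int \<Rightarrow> real"
  assumes G0: "\<And>k. G k \<ge> 0" and GS: "G summable_on UNIV"
    and HS: "(\<lambda>k. (real_of_int k)^2 * G k) summable_on UNIV"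
    and gG: "\<And>k. \<bar>g k\<bar> \<le> G k"
    and phi_range: "\<And>x. 0 \<le> \<phi> x \<and> \<phi> x \<le> 1"
    and phi_sym: "\<And>x. \<phi> (- x) = \<phi> x"
    and l: "l > 0" and n: "n \<ge> 1"
  shows "l^2 * \<bar>(1 / real n) * (\<Sum>i\<in>{1..int n}. \<Sum>j\<in>{1..int n}. \<phi> (real_of_int (i - j) / l) * g (j - i))
           - infsum g UNIV - c * infsum (\<lambda>k. (real_of_int k)^2 * g k) UNIV / l^2\<bar>
       \<le> l^2 * (4 * infsum (\<lambda>k. (real_of_int k)^2 * G k) UNIV / real n)
         + l^2 * \<bar>infsum (\<lambda>k. (\<phi> (real_of_int k / l) - 1 - c * (real_of_int k / l)^2) * g k) UNIV\<bar>"
proof -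
  define w where "w = (\<lambda>k. \<phi> (real_of_int k / l) * g k)"
  have wG: "\<bar>w k\<bar> \<le> G k" for k
    using gG[of k] phi_range[of "real_of_int k / l"]
    by (simp add: w_def abs_mult) (metis mult_left_le_one_le abs_ge_zero order.trans)
  have "\<phi> (real_of_int (i - j) / l) = \<phi> (real_of_int (j - i) / l)" for i j :: int
    using phi_sym[of "real_of_int (j - i) / l"] by (simp add: minus_divide_left)
  then have sym: "(\<Sum>i\<in>{1..int n}. \<Sum>j\<in>{1..int n}. \<phi> (real_of_int (i - j) / l) * g (j - i))
      = (\<Sum>i\<in>{1..int n}. \<Sum>j\<in>{1..int n}. w (j - i))"
    by (simp add: w_def)
  define A where "A = (1 / real n) * (\<Sum>i\<in>{1..int n}. \<Sum>j\<in>{1..int n}. w (j - i)) - infsum w UNIV"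
  define B where "B = infsum (\<lambda>k. (\<phi> (real_of_int k / l) - 1 - c * (real_of_int k / l)^2) * g k) UNIV"
  have "\<bar>A\<bar> \<le> 4 * infsum (\<lambda>k. (real_of_int k)^2 * G k) UNIV / real n"
    unfolding A_def by (rule lag_window_average_approx[OF G0 GS HS wG n])
  moreover have "infsum w UNIV - infsum g UNIV - c * infsum (\<lambda>k. (real_of_int k)^2 * g k) UNIV / l^2 = B"
    unfolding w_def B_def by (rule lag_window_sum_expansion[OF GS HS gG phi_range l])
  then have "(1 / real n) * (\<Sum>i\<in>{1..int n}. \<Sum>j\<in>{1..int n}. w (j - i))
      - infsum g UNIV - c * infsum (\<lambda>k. (real_of_int k)^2 * g k) UNIV / l^2 = A + B"
    unfolding A_def by linarith
  moreover have "l^2 * \<bar>A + B\<bar> \<le> l^2 * \<bar>A\<bar> + l^2 * \<bar>B\<bar>"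
    unfolding distrib_left[symmetric] by (intro mult_left_mono abs_triangle_ineq) auto
  ultimately show ?thesis
    unfolding sym B_def[symmetric] by (smt (verit) mult_left_mono zero_le_power2)
qed

lemma lag_window_bias_expansion:
  fixes ell :: "nat \<Rightarrow> real" and \<phi> :: "real \<Rightarrow> real" and G :: "int \<Rightarrow> real"
  assumes G0: "\<And>k. G k \<ge> 0" and GS: "G summable_on UNIV"
    and HS: "(\<lambda>k. (real_of_int k)^2 * G k) summable_on UNIV"
    and phi_range: "\<And>x. 0 \<le> \<phi> x \<and> \<phi> x \<le> 1"
    and phi_sym: "\<And>x. \<phi> (- x) = \<phi> x"
    and small: "\<forall>\<delta>>0. \<exists>\<eta>>0. \<forall>x. \<bar>x\<bar> < \<eta> \<longrightarrow> \<bar>\<phi> x - 1 - c * x^2\<bar> \<le> \<delta> * x^2"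
    and bound: "\<And>x. \<bar>\<phi> x - 1 - c * x^2\<bar> \<le> R * x^2"
    and l_pos: "\<And>n. ell n > 0"
    and l_inf: "filterlim ell at_top sequentially"
    and l_rate: "ell \<in> O(\<lambda>n. real n powr (1/2 - \<epsilon>))" and \<epsilon>: "\<epsilon> > 0"
    and e: "e > 0"
  shows "\<forall>\<^sub>F n in sequentially. \<forall>g. (\<forall>k. \<bar>g k\<bar> \<le> G k) \<longrightarrow>
     ell n ^ 2 * \<bar>(1 / real n) * (\<Sum>i\<in>{1..int n}. \<Sum>j\<in>{1..int n}. \<phi> (real_of_int (i - j) / ell n) * g (j - i))
        - infsum g UNIV - c * infsum (\<lambda>k. (real_of_int k)^2 * g k) UNIV / ell n ^ 2\<bar> \<le> e"
proof -
  define K where "K = infsum (\<lambda>k. (real_of_int k)^2 * G k) UNIV"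
  have remainder: "\<forall>\<^sub>F n in sequentially. \<forall>g. (\<forall>k. \<bar>g k\<bar> \<le> G k) \<longrightarrow> ell n ^ 2
      * \<bar>infsum (\<lambda>k. (\<phi> (real_of_int k / ell n) - 1 - c * (real_of_int k / ell n)^2) * g k) UNIV\<bar> \<le> e / 2"
    using l_inf lag_window_remainder_eventually_small[OF G0 HS small bound, of "e / 2"] e
    unfolding filterlim_iff by auto
  have "((\<lambda>n. 4 * K * (ell n ^ 2 / real n)) \<longlongrightarrow> 4 * K * 0) sequentially"
    by (intro tendsto_mult_left square_div_tendsto_0_of_bigo_powr[OF l_rate \<epsilon>])
  then have "\<forall>\<^sub>F n in sequentially. 4 * K * (ell n ^ 2 / real n) < e / 2"
    using e by (intro order_tendstoD(2)) auto
  then have average: "\<forall>\<^sub>F n in sequentially. ell n ^ 2 * (4 * K / real n) \<le> e / 2"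
    by (rule eventually_mono) (simp add: mult_ac)
  show ?thesis
    using remainder average eventually_ge_at_top[of 1]
  proof eventually_elim
    case (elim n)
    show ?case
    proof (intro allI impI)
      fix g :: "int \<Rightarrow> real" assume "\<forall>k. \<bar>g k\<bar> \<le> G k"
      then have gG: "\<And>k. \<bar>g k\<bar> \<le> G k" by blast
      note bias = lag_window_bias_le[where G = G and \<phi> = \<phi> and c = c,
          OF G0 GS HS gG phi_range phi_sym l_pos[of n] elim(3)]
      note remainder_g = elim(1)[rule_format, OF gG]
      show "ell n ^ 2 * \<bar>(1 / real n) * (\<Sum>i\<in>{1..int n}. \<Sum>j\<in>{1..int n}. \<phi> (real_of_int (i - j) / ell n) * g (j - i))
          - infsum g UNIV - c * infsum (\<lambda>k. (real_of_int k)^2 * g k) UNIV / ell n ^ 2\<bar> \<le> e"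
        using bias remainder_g elim(2) unfolding K_def by linarith
    qed
  qed
qed

section \<open>Covariances of a stationary mixing sequence\<close>

definition lower_orthant :: "real^'d \<Rightarrow> (real^'d) set" where
  "lower_orthant u = {x. \<forall>j. x $ j \<le> u $ j}"

lemma ind_le_eq_indicator: "ind_le x u = indicator (lower_orthant u) x"
  by (simp add: ind_le_def indicator_def lower_orthant_def)

lemma lower_orthant_borel: "lower_orthant u \<in> sets borel"
  unfolding lower_orthant_def
  by (intro borel_closed closed_Collect_all closed_Collect_le continuous_intros)

lemma ind_le_borel_measurable: "(\<lambda>x. ind_le x u) \<in> borel_measurable borel"
  unfolding ind_le_eq_indicator by (intro borel_measurable_indicator lower_orthant_borel)

lemma integral_stationary_shift:
  fixes M :: "'a measure" and U :: "int \<Rightarrow> 'a \<Rightarrow> real^'d" and p q :: "real^'d \<Rightarrow> real"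
  assumes meas: "\<And>i. U i \<in> borel_measurable M"
    and stat: "strictly_stationary M U"
    and p: "p \<in> borel_measurable borel" and q: "q \<in> borel_measurable borel"
  shows "integral\<^sup>L M (\<lambda>\<omega>. p (U i \<omega>) * q (U j \<omega>)) = integral\<^sup>L M (\<lambda>\<omega>. p (U 0 \<omega>) * q (U (j - i) \<omega>))"
proof -
  define I where "I = {0, j - i}"
  define N where "N = PiM I (\<lambda>_. borel :: (real^'d) measure)"
  define F where "F = (\<lambda>x::int \<Rightarrow> real^'d. p (x 0) * q (x (j - i)))"
  have "finite I" by (simp add: I_def)
  then have eq: "distr M N (\<lambda>\<omega>. \<lambda>t\<in>I. U t \<omega>) = distr M N (\<lambda>\<omega>. \<lambda>t\<in>I. U (t + i) \<omega>)"
    using stat unfolding strictly_stationary_def N_def by blast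
  have Fm: "F \<in> borel_measurable N" using p q unfolding F_def N_def I_def by measurable
  have m0: "(\<lambda>\<omega>. \<lambda>t\<in>I. U t \<omega>) \<in> measurable M N"
    and mi: "(\<lambda>\<omega>. \<lambda>t\<in>I. U (t + i) \<omega>) \<in> measurable M N"
    unfolding N_def by (intro measurable_restrict meas)+
  have "integral\<^sup>L M (\<lambda>\<omega>. p (U i \<omega>) * q (U j \<omega>)) = integral\<^sup>L M (\<lambda>\<omega>. F (\<lambda>t\<in>I. U (t + i) \<omega>))"
    by (simp add: F_def I_def)
  also have "\<dots> = integral\<^sup>L (distr M N (\<lambda>\<omega>. \<lambda>t\<in>I. U (t + i) \<omega>)) F"
    by (rule integral_distr[symmetric, OF mi Fm])
  also have "\<dots> = integral\<^sup>L M (\<lambda>\<omega>. F (\<lambda>t\<in>I. U t \<omega>))"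
    unfolding eq[symmetric] by (rule integral_distr[OF m0 Fm])
  also have "\<dots> = integral\<^sup>L M (\<lambda>\<omega>. p (U 0 \<omega>) * q (U (j - i) \<omega>))"
    by (simp add: F_def I_def)
  finally show ?thesis .
qed

lemma cov_cong:
  assumes "\<And>\<omega>. \<omega> \<in> space M \<Longrightarrow> X \<omega> = X' \<omega>" "\<And>\<omega>. \<omega> \<in> space M \<Longrightarrow> Y \<omega> = Y' \<omega>"
  shows "cov M X Y = cov M X' Y'"
proof -
  have "integral\<^sup>L M X = integral\<^sup>L M X'" "integral\<^sup>L M Y = integral\<^sup>L M Y'"
    by (auto intro!: Bochner_Integration.integral_cong simp: assms)
  then show ?thesis unfolding cov_def using assms by (auto intro!: Bochner_Integration.integral_cong)
qed

lemma (in prob_space) cov_indicator: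
  assumes A: "A \<in> events" and B: "B \<in> events"
  shows "cov M (indicator A) (indicator B) = prob (A \<inter> B) - prob A * prob B"
proof -
  have AB: "A \<inter> B \<in> events" using A B by blast
  have int: "integrable M (indicator E :: _ \<Rightarrow> real)" if "E \<in> events" for E
    using that by (intro integrable_const_bound[where B = 1]) auto
  have exp: "expectation (indicator E) = prob E" if "E \<in> events" for E
    using that by (simp add: Int_absorb2 sets.sets_into_space)
  have expand: "(\<lambda>\<omega>. (indicator A \<omega> - prob A) * (indicator B \<omega> - prob B))
     = (\<lambda>\<omega>. (indicator (A \<inter> B) \<omega> - prob B * indicator A \<omega> - prob A * indicator B \<omega>) + prob A * prob B :: real)"
    by (auto simp: fun_eq_iff indicator_def algebra_simps)
  have "cov M (indicator A) (indicator B)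
      = expectation (\<lambda>\<omega>. indicator (A \<inter> B) \<omega> - prob B * indicator A \<omega> - prob A * indicator B \<omega>) + prob A * prob B"
    unfolding cov_def exp[OF A] exp[OF B] expand
    using int[OF A] int[OF B] int[OF AB] by (subst Bochner_Integration.integral_add) (auto simp: prob_space)
  also have "\<dots> = prob (A \<inter> B) - prob B * prob A - prob A * prob B + prob A * prob B"
    using int[OF A] int[OF B] int[OF AB] exp[OF A] exp[OF B] exp[OF AB]
    by (simp add: Bochner_Integration.integral_diff)
  finally show ?thesis by simp
qed

lemma (in prob_space) abs_prob_diff_prod_le_1: "\<bar>prob C - prob A * prob B\<bar> \<le> 1"
proof -
  have "0 \<le> prob A * prob B" "prob A * prob B \<le> 1" by (simp_all add: mult_le_one)
  then show ?thesis unfolding abs_le_iff using measure_nonneg[of M C] prob_le_1[of C] by linarith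
qed

lemma abs_gamma_cov_le_alpha_mix:
  fixes M :: "'a measure" and U :: "int \<Rightarrow> 'a \<Rightarrow> real^'d"
  assumes P: "prob_space M" and meas: "\<And>i. U i \<in> borel_measurable M"
  shows "\<bar>gamma_cov M U k u v\<bar> \<le> alpha_mix M U (nat \<bar>k\<bar>)"
proof -
  interpret prob_space M by (rule P)
  define E where "E = (\<lambda>i w. U i -` lower_orthant w \<inter> space M)"
  have E_events: "E i w \<in> events" for i w
    unfolding E_def by (rule measurable_sets[OF meas lower_orthant_borel])
  have E_gen: "E i w \<in> gen_sigma M U I" if "i \<in> I" for i w I
    unfolding gen_sigma_def E_def by (rule sigma_sets.Basic) (use that lower_orthant_borel in blast)
  have "gamma_cov M U k u v = cov M (indicator (E 0 u)) (indicator (E k v))"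
    unfolding gamma_cov_def by (rule cov_cong) (auto simp: E_def ind_le_eq_indicator indicator_def)
  then have gamma: "gamma_cov M U k u v = prob (E 0 u \<inter> E k v) - prob (E 0 u) * prob (E k v)"
    by (simp add: cov_indicator E_events)
  define S where "S = {\<bar>prob (A \<inter> B) - prob A * prob B\<bar> | p A B.
      A \<in> gen_sigma M U {..p} \<and> B \<in> gen_sigma M U {p + int (nat \<bar>k\<bar>)..}}"
  have "bdd_above S"
    unfolding S_def by (rule bdd_aboveI[where M = 1]) (auto intro: abs_prob_diff_prod_le_1)
  moreover have "\<bar>gamma_cov M U k u v\<bar> \<in> S"
  proof (cases "k \<ge> 0")
    case True
    have "E 0 u \<in> gen_sigma M U {..0}" "E k v \<in> gen_sigma M U {0 + int (nat \<bar>k\<bar>)..}"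
      using True by (auto intro!: E_gen)
    then show ?thesis unfolding S_def gamma by blast
  next
    case False
    have "E k v \<in> gen_sigma M U {..k}" "E 0 u \<in> gen_sigma M U {k + int (nat \<bar>k\<bar>)..}"
      using False by (auto intro!: E_gen)
    moreover have "\<bar>gamma_cov M U k u v\<bar> = \<bar>prob (E k v \<inter> E 0 u) - prob (E k v) * prob (E 0 u)\<bar>"
      unfolding gamma by (simp add: Int_commute mult.commute)
    ultimately show ?thesis unfolding S_def by blast
  qed
  ultimately show ?thesis unfolding alpha_mix_def S_def[symmetric] by (rule cSup_upper[rotated])
qed

lemma alpha_mix_nonneg:
  assumes P: "prob_space M" and meas: "\<And>i. U i \<in> borel_measurable M"
  shows "alpha_mix M U r \<ge> 0"
proof -
  have "\<bar>gamma_cov M U (int r) 0 0\<bar> \<le> alpha_mix M U (nat \<bar>int r\<bar>)"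
    by (rule abs_gamma_cov_le_alpha_mix[OF P meas])
  then show ?thesis by simp
qed

lemma alpha_mix_lag_summable:
  assumes P: "prob_space M" and meas: "\<And>i. U i \<in> borel_measurable M"
    and a3: "a > 3" and mix: "alpha_mix M U \<in> O(\<lambda>r. real r powr (- a))"
  shows "(\<lambda>k::int. alpha_mix M U (nat \<bar>k\<bar>)) summable_on UNIV"
    and "(\<lambda>k::int. (real_of_int k)^2 * alpha_mix M U (nat \<bar>k\<bar>)) summable_on UNIV"
proof -
  note nonneg = alpha_mix_nonneg[OF P meas]
  have "summable (alpha_mix M U)"
    by (rule summable_comparison_test_bigo[OF _ mix]) (use a3 in \<open>simp add: summable_real_powr_iff\<close>)
  then show "(\<lambda>k::int. alpha_mix M U (nat \<bar>k\<bar>)) summable_on UNIV"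
    by (rule summable_on_int_abs_of_summable) (rule nonneg)
  have "(\<lambda>r. (real r)^2 * alpha_mix M U r) \<in> O(\<lambda>r. (real r)^2 * real r powr (- a))"
    using mix by (rule landau_o.big.mult_left)
  also have "(\<lambda>r. (real r)^2 * real r powr (- a)) = (\<lambda>r. real r powr (2 - a))"
    by (auto simp: fun_eq_iff square_mult_powr)
  finally have "summable (\<lambda>r. (real r)^2 * alpha_mix M U r)"
    by (rule summable_comparison_test_bigo[rotated]) (use a3 in \<open>simp add: summable_real_powr_iff\<close>)
  from summable_on_int_abs_of_summable[OF this]
  show "(\<lambda>k::int. (real_of_int k)^2 * alpha_mix M U (nat \<bar>k\<bar>)) summable_on UNIV"
    using nonneg by simp
qed

lemma integral_centered_product_eq_gamma_cov:
  fixes M :: "'a measure" and U :: "int \<Rightarrow> 'a \<Rightarrow> real^'d" and C :: "real^'d \<Rightarrow> real"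
  assumes P: "prob_space M" and meas: "\<And>i. U i \<in> borel_measurable M"
    and stat: "strictly_stationary M U"
    and cdf: "\<And>u. C u = measure M {\<omega> \<in> space M. \<forall>j. U 0 \<omega> $ j \<le> u $ j}"
  shows "integral\<^sup>L M (\<lambda>\<omega>. (ind_le (U i \<omega>) u - C u) * (ind_le (U j \<omega>) v - C v)) = gamma_cov M U (j - i) u v"
proof -
  interpret prob_space M by (rule P)
  have shift: "integral\<^sup>L M (\<lambda>\<omega>. p (U i' \<omega>) * q (U j' \<omega>)) = integral\<^sup>L M (\<lambda>\<omega>. p (U 0 \<omega>) * q (U (j' - i') \<omega>))"
    if "p \<in> borel_measurable borel" "q \<in> borel_measurable borel" for p q :: "real^'d \<Rightarrow> real" and i' j'
    by (rule integral_stationary_shift[OF meas stat that])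
  have mean0: "expectation (\<lambda>\<omega>. ind_le (U 0 \<omega>) w) = C w" for w
  proof -
    have "expectation (\<lambda>\<omega>. ind_le (U 0 \<omega>) w) = expectation (indicator {\<omega> \<in> space M. \<forall>j. U 0 \<omega> $ j \<le> w $ j})"
      by (rule Bochner_Integration.integral_cong) (auto simp: ind_le_def indicator_def)
    then show ?thesis by (simp add: cdf Int_absorb2)
  qed
  have mean: "expectation (\<lambda>\<omega>. ind_le (U k \<omega>) w) = C w" for k w
    using shift[of "\<lambda>_. 1" "\<lambda>x. ind_le x w" k k] mean0 by (simp add: ind_le_borel_measurable)
  have "integral\<^sup>L M (\<lambda>\<omega>. (ind_le (U i \<omega>) u - C u) * (ind_le (U j \<omega>) v - C v))
      = integral\<^sup>L M (\<lambda>\<omega>. (ind_le (U 0 \<omega>) u - C u) * (ind_le (U (j - i) \<omega>) v - C v))"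
    using shift[of "\<lambda>x. ind_le x u - C u" "\<lambda>x. ind_le x v - C v" i j]
    by (simp add: borel_measurable_diff ind_le_borel_measurable)
  then show ?thesis unfolding gamma_cov_def cov_def mean by simp
qed

lemma expectation_sigma_tilde:
  fixes M :: "'a measure" and U :: "int \<Rightarrow> 'a \<Rightarrow> real^'d" and C :: "real^'d \<Rightarrow> real"
  assumes P: "prob_space M" and meas: "\<And>i. U i \<in> borel_measurable M"
    and stat: "strictly_stationary M U"
    and cdf: "\<And>u. C u = measure M {\<omega> \<in> space M. \<forall>j. U 0 \<omega> $ j \<le> u $ j}"
  shows "integral\<^sup>L M (sigma_tilde \<phi> l C U n u v)
     = (1 / real n) * (\<Sum>i\<in>{1..int n}. \<Sum>j\<in>{1..int n}. \<phi> (real_of_int (i - j) / l) * gamma_cov M U (j - i) u v)"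
proof -
  interpret prob_space M by (rule P)
  have centered_bound: "\<bar>ind_le x w - C w\<bar> \<le> 1" for x w
    using cdf[of w] measure_le_1[of "{\<omega> \<in> space M. \<forall>j. U 0 \<omega> $ j \<le> w $ j}"]
    by (auto simp: ind_le_def)
  have "integrable M (\<lambda>\<omega>. (ind_le (U i \<omega>) u - C u) * (ind_le (U j \<omega>) v - C v))" for i j
  proof (rule integrable_const_bound[where B = 1])
    show "AE \<omega> in M. norm ((ind_le (U i \<omega>) u - C u) * (ind_le (U j \<omega>) v - C v)) \<le> 1"
      using centered_bound by (auto simp: abs_mult intro!: mult_le_one)
    show "(\<lambda>\<omega>. (ind_le (U i \<omega>) u - C u) * (ind_le (U j \<omega>) v - C v)) \<in> borel_measurable M"
      by (intro borel_measurable_times borel_measurable_diff measurable_compose[OF meas ind_le_borel_measurable]) auto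
  qed
  then show ?thesis
    unfolding sigma_tilde_def
    by (simp add: mult.assoc Bochner_Integration.integral_sum
        integral_centered_product_eq_gamma_cov[OF P meas stat cdf])
qed

theorem proposition5p1:
  fixes M :: "'a measure" and U :: "int \<Rightarrow> 'a \<Rightarrow> real^'d"
    and C :: "real^'d \<Rightarrow> real" and a :: real
    and ell :: "nat \<Rightarrow> real" and \<epsilon> :: real
    and \<phi> \<phi>' \<phi>'' :: "real \<Rightarrow> real"
  assumes "prob_space M"
    and meas: "\<And>i. U i \<in> borel_measurable M"
    and stat: "strictly_stationary M U"
    and cdf: "\<And>u. C u = measure M {\<omega> \<in> space M. \<forall>j. U 0 \<omega> $ j \<le> u $ j}"
    and copula: "\<And>j x. 0 \<le> x \<Longrightarrow> x \<le> 1 \<Longrightarrow> measure M {\<omega> \<in> space M. U 0 \<omega> $ j \<le> x} = x"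
    and a3: "a > 3"
    and mix: "alpha_mix M U \<in> O(\<lambda>r. real r powr (- a))"
    and l_pos: "\<And>n. ell n > 0"
    and l_inf: "filterlim ell at_top sequentially"
    and eps: "0 < \<epsilon>" "\<epsilon> < 1/2"
    and l_rate: "ell \<in> O(\<lambda>n. real n powr (1/2 - \<epsilon>))"
    and phi_range: "\<And>x. 0 \<le> \<phi> x \<and> \<phi> x \<le> 1"
    and phi_sym: "\<And>x. \<phi> (- x) = \<phi> x"
    and phi0: "\<phi> 0 = 1"
    and phi_supp: "\<And>x. \<bar>x\<bar> > 1 \<Longrightarrow> \<phi> x = 0"
    and phi_d1: "\<And>x. x \<in> {-1..1} \<Longrightarrow> (\<phi> has_real_derivative \<phi>' x) (at x within {-1..1})"
    and phi_d2: "\<And>x. x \<in> {-1..1} \<Longrightarrow> (\<phi>' has_real_derivative \<phi>'' x) (at x within {-1..1})"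
    and phi_cont: "continuous_on {-1..1} \<phi>''"
    and phi2_nz: "\<phi>'' 0 \<noteq> 0"
  shows "\<forall>e>0. \<forall>\<^sub>F n in sequentially. \<forall>u\<in>unit_cube. \<forall>v\<in>unit_cube.
     ell n ^ 2 * \<bar>(integral\<^sup>L M (sigma_tilde \<phi> (ell n) C U n u v) - sigma_C M U u v)
        - (\<phi>'' 0 / 2) * (\<Sum>\<^sub>\<infinity>k\<in>(UNIV::int set). real_of_int k ^ 2 * gamma_cov M U k u v) / ell n ^ 2\<bar> \<le> e"
proof -
  note P = \<open>prob_space M\<close>
  define G where "G = (\<lambda>k::int. alpha_mix M U (nat \<bar>k\<bar>))"
  have G0: "\<And>k. G k \<ge> 0" unfolding G_def by (rule alpha_mix_nonneg[OF P meas])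
  have GS: "G summable_on UNIV" and HS: "(\<lambda>k. (real_of_int k)^2 * G k) summable_on UNIV"
    unfolding G_def by (rule alpha_mix_lag_summable[OF P meas a3 mix])+
  have gamma_le: "\<bar>gamma_cov M U k u v\<bar> \<le> G k" for k u v
    unfolding G_def by (rule abs_gamma_cov_le_alpha_mix[OF P meas])
  have phi_local: "\<forall>\<delta>>0. \<exists>\<eta>>0. \<forall>x. \<bar>x\<bar> < \<eta> \<longrightarrow> \<bar>\<phi> x - 1 - \<phi>'' 0 / 2 * x^2\<bar> \<le> \<delta> * x^2"
    using even_kernel_taylor[OF phi_sym phi0 phi_d1 phi_d2 phi_cont] by blast
  obtain R where bound: "\<And>x. \<bar>\<phi> x - 1 - \<phi>'' 0 / 2 * x^2\<bar> \<le> R * x^2"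
    using bounded_kernel_quadratic_remainder_bound[OF phi_range phi_local] by blast
  note expansion =
    lag_window_bias_expansion[OF G0 GS HS phi_range phi_sym phi_local bound l_pos l_inf l_rate eps(1)]
  show ?thesis
  proof (intro allI impI, erule expansion[THEN eventually_mono], intro ballI)
    fix e n u v
    assume "\<forall>g. (\<forall>k. \<bar>g k\<bar> \<le> G k) \<longrightarrow> ell n ^ 2 * \<bar>(1 / real n)
      * (\<Sum>i\<in>{1..int n}. \<Sum>j\<in>{1..int n}. \<phi> (real_of_int (i - j) / ell n) * g (j - i))
      - infsum g UNIV - \<phi>'' 0 / 2 * infsum (\<lambda>k. (real_of_int k)^2 * g k) UNIV / ell n ^ 2\<bar> \<le> e"
    from this[rule_format, OF gamma_le]
    show "ell n ^ 2 * \<bar>(integral\<^sup>L M (sigma_tilde \<phi> (ell n) C U n u v) - sigma_C M U u v)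
        - (\<phi>'' 0 / 2) * (\<Sum>\<^sub>\<infinity>k\<in>(UNIV::int set). real_of_int k ^ 2 * gamma_cov M U k u v) / ell n ^ 2\<bar> \<le> e"
      by (simp add: expectation_sigma_tilde[OF P meas stat cdf] sigma_C_def)
  qed
qed

end
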